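(* Let $t\geq3$, let $A_1,\dots,A_k\in\Pi_n^{(t)}$, let $\epsilon_1,\dots,\epsilon_k$ be independent uniformly distributed $\{-1,1\}$-valued random variables, and let $R=\lceil\log_2 n\rceil$. Then for $p\geq1$, $$\mathbb{E}\Big[\Big\|\sum_{i=1}^k\epsilon_iA_i\Big\|_{\ell_p,\dots,\ell_p}\Big]\leq2^t\sum_{\mathbf r\in[R]^t}\frac{\mathbb{E}\Big[\max\Big\{\Big(\sum_{i=1}^k\epsilon_iA_i\Big)(\mathbf x): \mathbf x\in H^n_{2^{r_1}}\times\cdots\times H^n_{2^{r_t}}\Big\}\Big]}{2^{(r_1+\cdots+r_t)/p}}.$$
   Context: For $d\in\mathbb{N}$, $H^n_d=\{x\in\{-1,0,1\}^n: \|x\|_{\ell_0}=\min\{d,n\}\}$, where $\|x\|_{\ell_0}$ is the number of nonzero entries; for $\mathbf x=(x[1],\dots,x[t])$ we write $A(\mathbf x)=A(x[1],\dots,x[t])$. $\Pi_n^{(t)}$ is the set of $t$-linear forms $A$ on $\mathbb{R}^n$ such that $|A(e_{s_1},\dots,e_{s_t})|$ summed over all indices except one fixed coordinate (i.e. $|A|(\mathbf 1,\dots,e_s,\dots,\mathbf 1)$, with $|A|$ the form with entries $|A(e_{s_1},\dots,e_{s_t})|$) is at most $1$ for every $s\in[n]$ and every position. $\|A\|_{\ell_p,\dots,\ell_p}=\sup\{A(x[1],\dots,x[t])/(\|x[1]\|_{\ell_p}\cdots\|x[t]\|_{\ell_p}): x[i]\neq0\}$. $[R]=\{1,\dots,R\}$.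 *)

theory Defs
  imports "HOL-Probability.Probability"
begin

text \<open>A t-linear form on R^n is given by its coefficients A(e_{s_1},...,e_{s_t}),
  i.e. a function on index tuples s : {0..<t} -> {0..<n}.
  Vectors of R^n are functions nat => real (coordinates 0..<n);
  a tuple (x[1],...,x[t]) is a function nat => nat => real (positions 0..<t).\<close>

definition idx :: "nat \<Rightarrow> nat \<Rightarrow> (nat \<Rightarrow> nat) set" where
  "idx t n = PiE {..<t} (\<lambda>_. {..<n})"

definition mlf_eval :: "nat \<Rightarrow> nat \<Rightarrow> ((nat \<Rightarrow> nat) \<Rightarrow> real) \<Rightarrow> (nat \<Rightarrow> nat \<Rightarrow> real) \<Rightarrow> real" where
  "mlf_eval t n A xs = (\<Sum>s\<in>idx t n. A s * (\<Prod>j<t. xs j (s j)))"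

definition Pi_class :: "nat \<Rightarrow> nat \<Rightarrow> ((nat \<Rightarrow> nat) \<Rightarrow> real) \<Rightarrow> bool" where
  "Pi_class t n A \<longleftrightarrow>
     (\<forall>j<t. \<forall>s0<n. (\<Sum>s\<in>{s\<in>idx t n. s j = s0}. \<bar>A s\<bar>) \<le> 1)"

definition lp_norm :: "nat \<Rightarrow> real \<Rightarrow> (nat \<Rightarrow> real) \<Rightarrow> real" where
  "lp_norm n p v = (\<Sum>i<n. \<bar>v i\<bar> powr p) powr (1 / p)"

definition mlf_norm :: "nat \<Rightarrow> nat \<Rightarrow> real \<Rightarrow> ((nat \<Rightarrow> nat) \<Rightarrow> real) \<Rightarrow> real" where
  "mlf_norm t n p A = Sup {mlf_eval t n A xs / (\<Prod>j<t. lp_norm n p (xs j)) | xs.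
       xs \<in> PiE {..<t} (\<lambda>_. {v \<in> extensional {..<n}. (\<exists>i<n. v i \<noteq> 0)})}"

definition Hset :: "nat \<Rightarrow> nat \<Rightarrow> (nat \<Rightarrow> real) set" where
  "Hset n d = {x \<in> PiE {..<n} (\<lambda>_. {-1, 0, 1}). card {i\<in>{..<n}. x i \<noteq> 0} = min d n}"

definition rademacher :: "nat \<Rightarrow> (nat \<Rightarrow> real) pmf" where
  "rademacher k = Pi_pmf {..<k} 0 (\<lambda>_. pmf_of_set {-1, 1})"

definition rsum :: "nat \<Rightarrow> (nat \<Rightarrow> (nat \<Rightarrow> nat) \<Rightarrow> real) \<Rightarrow> (nat \<Rightarrow> real) \<Rightarrow> (nat \<Rightarrow> nat) \<Rightarrow> real" where
  "rsum k A \<epsilon> = (\<lambda>s. \<Sum>i<k. \<epsilon> i * A i s)"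

end

theory Submission
  imports Defs
begin

text \<open>The bound on the norm holds pointwise in \<open>\<epsilon>\<close>, for every multilinear form.
  Split each vector \<open>x\<close> of a tuple into dyadic layers: coordinate \<open>i\<close> lies in layer \<open>r\<close>
  when \<open>|x i|^p\<close> is roughly \<open>\<parallel>x\<parallel>_p^p / 2^r\<close>. Then layer \<open>r\<close> has at most \<open>2^r\<close>
  nonzero coordinates, each of modulus at most \<open>\<parallel>x\<parallel>_p / 2^((r-1)/p)\<close>. Such a sparse bounded
  vector is a nonnegative combination, of total weight the bound, of elements of \<open>H^n_(2^r)\<close>:
  average over random sign patterns on a support of size \<open>2^r\<close>. Expanding the form
  multilinearly over the layers and over these combinations gives the bound.\<close>

lemma mlf_eval_cong:
  assumes "\<forall>j<t. \<forall>i<n. xs j i = ys j i"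
  shows "mlf_eval t n B xs = mlf_eval t n B ys"
  unfolding mlf_eval_def
proof (rule sum.cong[OF refl])
  fix s assume "s \<in> idx t n"
  hence "\<forall>j<t. s j < n" by (auto simp: idx_def PiE_def Pi_def)
  thus "B s * (\<Prod>j<t. xs j (s j)) = B s * (\<Prod>j<t. ys j (s j))"
    using assms by (intro arg_cong[where f="\<lambda>x. B s * x"] prod.cong) auto
qed

lemma mlf_eval_sum_expand:
  assumes fin: "\<forall>j<t. finite (I j)"
    and xs: "\<forall>j<t. \<forall>i<n. xs j i = (\<Sum>a\<in>I j. w j a * \<phi> j a i)"
  shows "mlf_eval t n B xs =
    (\<Sum>as\<in>PiE {..<t} I. (\<Prod>j<t. w j (as j)) * mlf_eval t n B (\<lambda>j. \<phi> j (as j)))"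
proof -
  have "mlf_eval t n B xs =
      (\<Sum>s\<in>idx t n. B s * (\<Sum>as\<in>PiE {..<t} I. \<Prod>j<t. w j (as j) * \<phi> j (as j) (s j)))"
    unfolding mlf_eval_def
  proof (rule sum.cong[OF refl])
    fix s assume "s \<in> idx t n"
    hence "\<forall>j<t. s j < n" by (auto simp: idx_def PiE_def Pi_def)
    hence "(\<Prod>j<t. xs j (s j)) = (\<Prod>j<t. \<Sum>a\<in>I j. w j a * \<phi> j a (s j))"
      using xs by (intro prod.cong) auto
    also have "\<dots> = (\<Sum>as\<in>PiE {..<t} I. \<Prod>j<t. w j (as j) * \<phi> j (as j) (s j))"
      by (rule prod_sum_PiE) (use fin in auto)
    finally show "B s * (\<Prod>j<t. xs j (s j)) =
        B s * (\<Sum>as\<in>PiE {..<t} I. \<Prod>j<t. w j (as j) * \<phi> j (as j) (s j))"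
      by simp
  qed
  also have "\<dots> = (\<Sum>as\<in>PiE {..<t} I. \<Sum>s\<in>idx t n.
      (\<Prod>j<t. w j (as j)) * (B s * (\<Prod>j<t. \<phi> j (as j) (s j))))"
    by (subst sum.swap) (simp add: sum_distrib_left prod.distrib mult_ac)
  also have "\<dots> = (\<Sum>as\<in>PiE {..<t} I. (\<Prod>j<t. w j (as j)) * mlf_eval t n B (\<lambda>j. \<phi> j (as j)))"
    by (simp add: mlf_eval_def sum_distrib_left)
  finally show ?thesis .
qed

lemma mlf_eval_le_convex_comb:
  assumes fin: "\<forall>j<t. finite (I j)"
    and xs: "\<forall>j<t. \<forall>i<n. xs j i = (\<Sum>a\<in>I j. w j a * \<phi> j a i)"
    and w_nonneg: "\<forall>j<t. \<forall>a\<in>I j. 0 \<le> w j a"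
    and \<phi>_in: "\<forall>j<t. \<forall>a\<in>I j. \<phi> j a \<in> H j"
    and finH: "\<forall>j<t. finite (H j)"
  shows "mlf_eval t n B xs \<le> (\<Prod>j<t. \<Sum>a\<in>I j. w j a) * Max (mlf_eval t n B ` PiE {..<t} H)"
proof -
  let ?M = "Max (mlf_eval t n B ` PiE {..<t} H)"
  have "mlf_eval t n B xs =
      (\<Sum>as\<in>PiE {..<t} I. (\<Prod>j<t. w j (as j)) * mlf_eval t n B (\<lambda>j. \<phi> j (as j)))"
    by (rule mlf_eval_sum_expand[OF fin xs])
  also have "\<dots> \<le> (\<Sum>as\<in>PiE {..<t} I. (\<Prod>j<t. w j (as j)) * ?M)"
  proof (rule sum_mono)
    fix as assume as: "as \<in> PiE {..<t} I"
    have "mlf_eval t n B (\<lambda>j. \<phi> j (as j)) = mlf_eval t n B (restrict (\<lambda>j. \<phi> j (as j)) {..<t})"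
      by (rule mlf_eval_cong) auto
    moreover have "restrict (\<lambda>j. \<phi> j (as j)) {..<t} \<in> PiE {..<t} H"
      using as \<phi>_in by (auto simp: PiE_def Pi_def)
    ultimately have "mlf_eval t n B (\<lambda>j. \<phi> j (as j)) \<le> ?M"
      using finH by (auto intro!: Max_ge finite_imageI finite_PiE)
    moreover have "0 \<le> (\<Prod>j<t. w j (as j))"
      using as w_nonneg by (intro prod_nonneg) (auto simp: PiE_def Pi_def)
    ultimately show "(\<Prod>j<t. w j (as j)) * mlf_eval t n B (\<lambda>j. \<phi> j (as j))
        \<le> (\<Prod>j<t. w j (as j)) * ?M"
      by (rule mult_left_mono)
  qed
  also have "\<dots> = (\<Sum>as\<in>PiE {..<t} I. \<Prod>j<t. w j (as j)) * ?M"
    by (simp add: sum_distrib_right)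
  also have "(\<Sum>as\<in>PiE {..<t} I. \<Prod>j<t. w j (as j)) = (\<Prod>j<t. \<Sum>a\<in>I j. w j a)"
    by (rule prod_sum_PiE[symmetric]) (use fin in auto)
  finally show ?thesis .
qed

lemma sum_sign_patterns_weight:
  assumes "finite L"
  shows "(\<Sum>e\<in>PiE L (\<lambda>_. {-1, 1}). \<Prod>l\<in>L. (1 + e l * v l) / 2) = (1::real)"
proof -
  have "(\<Sum>e\<in>PiE L (\<lambda>_. {-1, 1}). \<Prod>l\<in>L. (1 + e l * v l) / 2)
      = (\<Prod>l\<in>L. \<Sum>x\<in>{-1, 1::real}. (1 + x * v l) / 2)"
    by (rule prod_sum_PiE[symmetric]) (use assms in auto)
  also have "\<dots> = 1" by (intro prod.neutral ballI) (simp add: add_divide_distrib[symmetric])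
  finally show ?thesis .
qed

lemma sum_sign_patterns_coordinate:
  assumes "finite L" and "i \<in> L"
  shows "(\<Sum>e\<in>PiE L (\<lambda>_. {-1, 1}). e i * (\<Prod>l\<in>L. (1 + e l * v l) / 2)) = (v i :: real)"
proof -
  define g where "g l x = (1 + x * v l) / 2 * (if l = i then x else 1)" for l and x :: real
  have "(\<Prod>l\<in>L. g l (e l)) = (\<Prod>l\<in>L. (1 + e l * v l) / 2) * (\<Prod>l\<in>L. if l = i then e l else 1)" for e
    unfolding g_def by (rule prod.distrib)
  hence "e i * (\<Prod>l\<in>L. (1 + e l * v l) / 2) = (\<Prod>l\<in>L. g l (e l))" for e
    using assms by (simp add: prod.delta)
  hence "(\<Sum>e\<in>PiE L (\<lambda>_. {-1, 1}). e i * (\<Prod>l\<in>L. (1 + e l * v l) / 2))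
      = (\<Prod>l\<in>L. \<Sum>x\<in>{-1, 1::real}. g l x)"
    by (simp add: prod_sum_PiE[symmetric] assms(1))
  also have "\<dots> = (\<Prod>l\<in>L. if l = i then v l else 1)"
    by (intro prod.cong refl) (auto simp: g_def add_divide_distrib[symmetric] algebra_simps)
  also have "\<dots> = v i" using assms by (simp add: prod.delta)
  finally show ?thesis .
qed

lemma finite_Hset: "finite (Hset n d)"
proof (rule finite_subset)
  show "Hset n d \<subseteq> PiE {..<n} (\<lambda>_. {-1, 0, 1})" by (auto simp: Hset_def)
qed (auto intro: finite_PiE)

lemma Hset_nonempty: "Hset n d \<noteq> {}"
proof -
  let ?h = "\<lambda>i. if i < n then (if i < min d n then 1 else 0) else (undefined::real)"
  have "{i\<in>{..<n}. ?h i \<noteq> 0} = {..<min d n}" by auto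
  hence "?h \<in> Hset n d" by (auto simp: Hset_def PiE_def Pi_def extensional_def)
  thus ?thesis by blast
qed

lemma Hset_uminus: "h \<in> Hset n d \<Longrightarrow> (\<lambda>i. if i < n then - h i else undefined) \<in> Hset n d"
proof -
  assume h: "h \<in> Hset n d"
  have "{i\<in>{..<n}. (if i < n then - h i else undefined) \<noteq> 0} = {i\<in>{..<n}. h i \<noteq> 0}" by auto
  thus ?thesis using h by (auto simp: Hset_def PiE_def Pi_def extensional_def)
qed

lemma sparse_vector_Hset_decomp:
  assumes a: "0 \<le> a" and y_le: "\<forall>i<n. \<bar>y i\<bar> \<le> a" and support: "card {i\<in>{..<n}. y i \<noteq> 0} \<le> D"
  obtains I :: "(nat \<Rightarrow> real) set" and w \<phi> where "finite I" "\<forall>e\<in>I. 0 \<le> w e"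
    "(\<Sum>e\<in>I. w e) = a" "\<forall>e\<in>I. \<phi> e \<in> Hset n D" "\<forall>i<n. y i = (\<Sum>e\<in>I. w e * \<phi> e i)"
proof -
  let ?S = "{i\<in>{..<n}. y i \<noteq> 0}"
  have "card ?S \<le> card {..<n}" by (intro card_mono) auto
  with support have "card ?S \<le> min D n" by simp
  then obtain L where SL: "?S \<subseteq> L" and Ln: "L \<subseteq> {..<n}" and card_L: "card L = min D n"
    using exists_subset_between[of ?S "min D n" "{..<n}"] by auto
  have finL: "finite L" using Ln finite_subset by blast
  define v where "v i = y i / a" for i
  have v_le: "\<bar>v l\<bar> \<le> 1" if "l \<in> L" for l
    using a y_le that Ln by (cases "a = 0") (auto simp: v_def abs_divide divide_le_eq_1)
  have av: "a * v i = y i" if "i < n" for i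
    using y_le that by (cases "a = 0") (auto simp: v_def)
  define I where "I = PiE L (\<lambda>_. {-1, 1::real})"
  define w where "w e = a * (\<Prod>l\<in>L. (1 + e l * v l) / 2)" for e :: "nat \<Rightarrow> real"
  define \<phi> where "\<phi> e = (\<lambda>i. if i < n then (if i \<in> L then e i else 0) else undefined)"
    for e :: "nat \<Rightarrow> real"
  show ?thesis
  proof
    show "finite I" unfolding I_def using finL by (intro finite_PiE) auto
    have "0 \<le> (1 + x * v l) / 2" if "x \<in> {-1, 1}" "l \<in> L" for x l
      using v_le[OF that(2)] that(1) by (auto simp: abs_le_iff)
    thus "\<forall>e\<in>I. 0 \<le> w e"
      unfolding w_def I_def using a by (auto intro!: mult_nonneg_nonneg prod_nonneg simp: PiE_def Pi_def)
    show "(\<Sum>e\<in>I. w e) = a"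
      using sum_sign_patterns_weight[OF finL, of v] by (simp add: w_def I_def sum_distrib_left[symmetric])
    show "\<forall>e\<in>I. \<phi> e \<in> Hset n D"
    proof
      fix e assume e: "e \<in> I"
      have "{i\<in>{..<n}. \<phi> e i \<noteq> 0} = L"
        using e Ln by (auto simp: \<phi>_def I_def PiE_def Pi_def)
      moreover have "\<phi> e \<in> PiE {..<n} (\<lambda>_. {-1, 0, 1})"
        using e Ln by (auto simp: \<phi>_def I_def PiE_def Pi_def extensional_def)
      ultimately show "\<phi> e \<in> Hset n D" using card_L by (simp add: Hset_def)
    qed
    show "\<forall>i<n. y i = (\<Sum>e\<in>I. w e * \<phi> e i)"
    proof (intro allI impI)
      fix i assume i: "i < n"
      show "y i = (\<Sum>e\<in>I. w e * \<phi> e i)"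
      proof (cases "i \<in> L")
        case True
        have "(\<Sum>e\<in>I. w e * \<phi> e i) = a * (\<Sum>e\<in>I. e i * (\<Prod>l\<in>L. (1 + e l * v l) / 2))"
          using True i by (simp add: w_def \<phi>_def sum_distrib_left mult_ac)
        also have "\<dots> = y i"
          using sum_sign_patterns_coordinate[OF finL True] av[OF i] by (simp add: I_def)
        finally show ?thesis ..
      qed (use SL i in \<open>auto simp: \<phi>_def\<close>)
    qed
  qed
qed

lemma mlf_eval_le_sparse:
  assumes a: "\<forall>j<t. 0 \<le> a j" and bounded: "\<forall>j<t. \<forall>i<n. \<bar>xs j i\<bar> \<le> a j"
    and sparse: "\<forall>j<t. card {i\<in>{..<n}. xs j i \<noteq> 0} \<le> D j"
  shows "mlf_eval t n B xs \<le> (\<Prod>j<t. a j) * Max (mlf_eval t n B ` PiE {..<t} (\<lambda>j. Hset n (D j)))"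
proof -
  define Q where "Q j = (\<lambda>(I :: (nat \<Rightarrow> real) set, w, \<phi>). finite I \<and> (\<forall>e\<in>I. 0 \<le> w e)
      \<and> (\<Sum>e\<in>I. w e) = a j \<and> (\<forall>e\<in>I. \<phi> e \<in> Hset n (D j)) \<and> (\<forall>i<n. xs j i = (\<Sum>e\<in>I. w e * \<phi> e i)))"
    for j
  have "\<exists>d. Q j d" if j: "j \<in> {..<t}" for j
  proof -
    have "0 \<le> a j" "\<forall>i<n. \<bar>xs j i\<bar> \<le> a j" "card {i\<in>{..<n}. xs j i \<noteq> 0} \<le> D j"
      using a bounded sparse j by auto
    then obtain I :: "(nat \<Rightarrow> real) set" and w \<phi> where "finite I" "\<forall>e\<in>I. 0 \<le> w e" "(\<Sum>e\<in>I. w e) = a j"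
      "\<forall>e\<in>I. \<phi> e \<in> Hset n (D j)" "\<forall>i<n. xs j i = (\<Sum>e\<in>I. w e * \<phi> e i)"
      by (rule sparse_vector_Hset_decomp) (rule that)
    thus ?thesis unfolding Q_def by (intro exI[of _ "(I, w, \<phi>)"]) simp
  qed
  then obtain d where "\<forall>j\<in>{..<t}. Q j (d j)" using bchoice[of "{..<t}" Q] by blast
  then obtain I w \<phi> where dec: "\<And>j. j < t \<Longrightarrow> finite (I j :: (nat \<Rightarrow> real) set) \<and> (\<forall>e\<in>I j. 0 \<le> w j e)
      \<and> (\<Sum>e\<in>I j. w j e) = a j \<and> (\<forall>e\<in>I j. \<phi> j e \<in> Hset n (D j))
      \<and> (\<forall>i<n. xs j i = (\<Sum>e\<in>I j. w j e * \<phi> j e i))"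
    unfolding Q_def by (intro that[of "\<lambda>j. fst (d j)" "\<lambda>j. fst (snd (d j))" "\<lambda>j. snd (snd (d j))"])
      (auto simp: case_prod_beta)
  have "mlf_eval t n B xs \<le> (\<Prod>j<t. \<Sum>e\<in>I j. w j e) * Max (mlf_eval t n B ` PiE {..<t} (\<lambda>j. Hset n (D j)))"
    by (rule mlf_eval_le_convex_comb) (use dec finite_Hset in auto)
  also have "(\<Prod>j<t. \<Sum>e\<in>I j. w j e) = (\<Prod>j<t. a j)"
    using dec by (intro prod.cong) auto
  finally show ?thesis .
qed

lemma mlf_eval_uminus_first:
  assumes "1 \<le> t"
  shows "mlf_eval t n B (xs(0 := (\<lambda>i. - xs 0 i))) = - mlf_eval t n B xs"
proof -
  obtain t' where t: "t = Suc t'" using assms by (cases t) auto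
  show ?thesis
    unfolding mlf_eval_def t prod.lessThan_Suc_shift
    by (simp add: sum_negf[symmetric])
qed

text \<open>Negating the first vector of a tuple stays inside the product of \<open>H\<close>-sets, so the
  maximum of the form over it dominates both a value and its negative.\<close>
lemma Max_mlf_eval_Hset_nonneg:
  assumes "1 \<le> t"
  shows "0 \<le> Max (mlf_eval t n B ` PiE {..<t} (\<lambda>j. Hset n (d j)))"
proof -
  let ?P = "PiE {..<t} (\<lambda>j. Hset n (d j))"
  have fin: "finite (mlf_eval t n B ` ?P)"
    by (intro finite_imageI finite_PiE finite_Hset) auto
  have "?P \<noteq> {}" using Hset_nonempty by (simp add: PiE_eq_empty_iff)
  then obtain hs where hs: "hs \<in> ?P" by blast
  let ?hs' = "hs(0 := (\<lambda>i. if i < n then - hs 0 i else undefined))"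
  have "?hs' \<in> ?P"
    using hs assms Hset_uminus[of "hs 0" n "d 0"] by (auto simp: PiE_def Pi_def extensional_def)
  hence "mlf_eval t n B ?hs' \<le> Max (mlf_eval t n B ` ?P)" using fin by auto
  moreover have "mlf_eval t n B ?hs' = mlf_eval t n B (hs(0 := (\<lambda>i. - hs 0 i)))"
    by (rule mlf_eval_cong) auto
  moreover have "mlf_eval t n B hs \<le> Max (mlf_eval t n B ` ?P)" using fin hs by auto
  ultimately show ?thesis using mlf_eval_uminus_first[OF assms, of n B hs] by linarith
qed

definition dyadic_level :: "nat \<Rightarrow> real \<Rightarrow> real \<Rightarrow> nat" where
  "dyadic_level R S q = (LEAST r. 1 \<le> r \<and> (r = R \<or> S < 2 ^ r * q))"

lemma dyadic_level:
  assumes "1 \<le> R"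
  shows dyadic_level_ge_1: "1 \<le> dyadic_level R S q"
    and dyadic_level_le: "dyadic_level R S q \<le> R"
    and dyadic_level_less: "dyadic_level R S q < R \<Longrightarrow> S < 2 ^ dyadic_level R S q * q"
    and dyadic_level_minimal: "1 < dyadic_level R S q \<Longrightarrow> 2 ^ (dyadic_level R S q - 1) * q \<le> S"
proof -
  let ?P = "\<lambda>r. 1 \<le> r \<and> (r = R \<or> S < 2 ^ r * q)"
  have PR: "?P R" using assms by simp
  have P: "?P (dyadic_level R S q)" unfolding dyadic_level_def by (rule LeastI[of ?P, OF PR])
  thus "1 \<le> dyadic_level R S q" by simp
  show le: "dyadic_level R S q \<le> R" unfolding dyadic_level_def by (rule Least_le[of ?P, OF PR])
  show "dyadic_level R S q < R \<Longrightarrow> S < 2 ^ dyadic_level R S q * q" using P by auto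
  assume gt: "1 < dyadic_level R S q"
  hence "\<not> ?P (dyadic_level R S q - 1)"
    unfolding dyadic_level_def by (intro not_less_Least) auto
  thus "2 ^ (dyadic_level R S q - 1) * q \<le> S" using gt le by auto
qed

definition dyadic_layer :: "nat \<Rightarrow> real \<Rightarrow> nat \<Rightarrow> (nat \<Rightarrow> real) \<Rightarrow> nat \<Rightarrow> nat \<Rightarrow> real" where
  "dyadic_layer n p R x r i =
    (if dyadic_level R (\<Sum>l<n. \<bar>x l\<bar> powr p) (\<bar>x i\<bar> powr p) = r then x i else 0)"

lemma sum_dyadic_layer:
  assumes "1 \<le> R"
  shows "(\<Sum>r\<in>{1..R}. dyadic_layer n p R x r i) = x i"
  using dyadic_level_ge_1[OF assms] dyadic_level_le[OF assms]
  by (simp add: dyadic_layer_def sum.delta')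

lemma abs_dyadic_layer_le:
  assumes p: "1 \<le> p" and R: "1 \<le> R" and r: "1 \<le> r" and i: "i < n"
  shows "\<bar>dyadic_layer n p R x r i\<bar> \<le> lp_norm n p x / 2 powr ((real r - 1) / p)"
proof (cases "dyadic_level R (\<Sum>l<n. \<bar>x l\<bar> powr p) (\<bar>x i\<bar> powr p) = r")
  case True
  define S where "S = (\<Sum>l<n. \<bar>x l\<bar> powr p)"
  have "\<bar>x i\<bar> powr p \<le> S"
    unfolding S_def using i by (intro member_le_sum) auto
  hence "2 ^ (r - 1) * \<bar>x i\<bar> powr p \<le> S"
    using dyadic_level_minimal[OF R, of S "\<bar>x i\<bar> powr p"] True r by (cases "r = 1") (auto simp: S_def)
  hence "\<bar>x i\<bar> powr p \<le> S / 2 powr (real r - 1)"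
    using r by (simp add: field_simps powr_realpow[symmetric] of_nat_diff)
  hence "(\<bar>x i\<bar> powr p) powr (1 / p) \<le> (S / 2 powr (real r - 1)) powr (1 / p)"
    using p by (intro powr_mono2) auto
  also have "\<dots> = S powr (1 / p) / 2 powr ((real r - 1) / p)"
    by (simp add: S_def powr_divide sum_nonneg powr_powr)
  finally show ?thesis
    using True p by (simp add: dyadic_layer_def lp_norm_def S_def powr_powr)
qed (simp add: dyadic_layer_def lp_norm_def)

text \<open>A coordinate in a layer \<open>r < R\<close> carries more than a \<open>2^-r\<close> share of \<open>\<parallel>x\<parallel>_p^p\<close>; the top
  layer is controlled by \<open>n \<le> 2^R\<close>.\<close>
lemma card_dyadic_layer_support_le:
  assumes R: "1 \<le> R" "n \<le> 2 ^ R" and r: "r \<le> R"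
  shows "card {i\<in>{..<n}. dyadic_layer n p R x r i \<noteq> 0} \<le> 2 ^ r"
proof -
  define S where "S = (\<Sum>l<n. \<bar>x l\<bar> powr p)"
  let ?L = "{i\<in>{..<n}. dyadic_level R S (\<bar>x i\<bar> powr p) = r}"
  have "card {i\<in>{..<n}. dyadic_layer n p R x r i \<noteq> 0} \<le> card ?L"
    by (intro card_mono) (auto simp: dyadic_layer_def S_def split: if_splits)
  also have "card ?L \<le> 2 ^ r"
  proof (cases "r < R \<and> ?L \<noteq> {}")
    case True
    have "(\<Sum>i\<in>?L. S) < (\<Sum>i\<in>?L. 2 ^ r * \<bar>x i\<bar> powr p)"
      using True dyadic_level_less[OF R(1)] by (intro sum_strict_mono) auto
    also have "\<dots> \<le> 2 ^ r * S"
      unfolding S_def sum_distrib_left[symmetric] by (intro mult_left_mono sum_mono2) auto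
    finally have "real (card ?L) * S < 2 ^ r * S" by simp
    moreover have "0 \<le> S" unfolding S_def by (intro sum_nonneg) auto
    ultimately have "real (card ?L) < 2 ^ r"
      by (metis mult_right_mono not_less)
    thus ?thesis by (metis less_imp_le of_nat_less_numeral_power_cancel_iff)
  next
    case False
    have "r = R \<or> ?L = {}" using False r by auto
    thus ?thesis
    proof
      assume "r = R"
      have "card ?L \<le> card {..<n}" by (intro card_mono) auto
      thus ?thesis using \<open>r = R\<close> R(2) by simp
    qed (simp only: card.empty zero_le)
  qed
  finally show ?thesis .
qed

lemma lp_norm_nonneg: "0 \<le> lp_norm n p x"
  by (simp add: lp_norm_def)

lemma lp_norm_pos:
  assumes "\<exists>i<n. x i \<noteq> 0"
  shows "0 < lp_norm n p x"
proof -
  obtain i where i: "i < n" "x i \<noteq> 0" using assms by auto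
  have "0 < \<bar>x i\<bar> powr p" using i by simp
  also have "\<dots> \<le> (\<Sum>l<n. \<bar>x l\<bar> powr p)"
    using i by (intro member_le_sum) auto
  finally show ?thesis unfolding lp_norm_def by simp
qed

lemma prod_divide_powr_le:
  fixes N :: "nat \<Rightarrow> real"
  assumes p: "1 \<le> p" and N: "\<forall>j<t. 0 \<le> N j"
  shows "(\<Prod>j<t. N j / 2 powr ((real (r j) - 1) / p))
      \<le> 2 ^ t * (\<Prod>j<t. N j) / 2 powr (real (\<Sum>j<t. r j) / p)"
proof -
  have "(\<Prod>j<t. 2 powr ((real (r j) - 1) / p)) = 2 powr (\<Sum>j<t. (real (r j) - 1) / p)"
    by (simp add: powr_sum)
  also have "(\<Sum>j<t. (real (r j) - 1) / p) = real (\<Sum>j<t. r j) / p - real t / p"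
    by (simp add: sum_divide_distrib[symmetric] sum_subtractf diff_divide_distrib)
  finally have "(\<Prod>j<t. N j / 2 powr ((real (r j) - 1) / p))
      = 2 powr (real t / p) * (\<Prod>j<t. N j) / 2 powr (real (\<Sum>j<t. r j) / p)"
    by (simp add: prod_dividef powr_diff)
  also have "\<dots> \<le> 2 ^ t * (\<Prod>j<t. N j) / 2 powr (real (\<Sum>j<t. r j) / p)"
  proof -
    have "2 powr (real t / p) \<le> 2 powr (real t)"
      using p by (intro powr_mono) (auto simp: divide_le_eq mult_le_cancel_left1)
    hence "2 powr (real t / p) \<le> 2 ^ t" by (simp add: powr_realpow)
    thus ?thesis using N by (intro divide_right_mono mult_right_mono prod_nonneg) auto
  qed
  finally show ?thesis .
qed

lemma mlf_eval_le_dyadic_sum: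
  assumes t: "1 \<le> t" and p: "1 \<le> p" and R: "1 \<le> R" "n \<le> 2 ^ R"
  shows "mlf_eval t n B xs \<le> (\<Prod>j<t. lp_norm n p (xs j)) * (2 ^ t * (\<Sum>r\<in>PiE {..<t} (\<lambda>_. {1..R}).
      Max (mlf_eval t n B ` PiE {..<t} (\<lambda>j. Hset n (2 ^ r j))) / 2 powr (real (\<Sum>j<t. r j) / p)))"
proof -
  define N where "N j = lp_norm n p (xs j)" for j
  define M where "M r = Max (mlf_eval t n B ` PiE {..<t} (\<lambda>j. Hset n (2 ^ r j)))" for r :: "nat \<Rightarrow> nat"
  define c where "c r = 2 powr (real (\<Sum>j<t. r j) / p)" for r :: "nat \<Rightarrow> nat"
  let ?layers = "\<lambda>r j. dyadic_layer n p R (xs j) (r j)"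
  have "mlf_eval t n B xs = (\<Sum>r\<in>PiE {..<t} (\<lambda>_. {1..R}). (\<Prod>j<t. 1) * mlf_eval t n B (?layers r))"
    by (rule mlf_eval_sum_expand) (simp_all add: sum_dyadic_layer[OF R(1), simplified])
  also have "\<dots> \<le> (\<Sum>r\<in>PiE {..<t} (\<lambda>_. {1..R}). 2 ^ t * (\<Prod>j<t. N j) / c r * M r)"
  proof (rule sum_mono)
    fix r assume r: "r \<in> PiE {..<t} (\<lambda>_. {1..R})"
    have r_range: "1 \<le> r j" "r j \<le> R" if "j < t" for j
      using r that by (auto simp: PiE_def Pi_def)
    have "mlf_eval t n B (?layers r) \<le> (\<Prod>j<t. N j / 2 powr ((real (r j) - 1) / p)) * M r"
      unfolding M_def N_def
    proof (rule mlf_eval_le_sparse)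
      show "\<forall>j<t. 0 \<le> lp_norm n p (xs j) / 2 powr ((real (r j) - 1) / p)"
        by (simp add: lp_norm_nonneg)
      show "\<forall>j<t. \<forall>i<n. \<bar>?layers r j i\<bar> \<le> lp_norm n p (xs j) / 2 powr ((real (r j) - 1) / p)"
        using abs_dyadic_layer_le[OF p R(1) r_range(1)] by blast
      show "\<forall>j<t. card {i\<in>{..<n}. ?layers r j i \<noteq> 0} \<le> 2 ^ r j"
        using card_dyadic_layer_support_le[OF R r_range(2)] by blast
    qed
    also have "\<dots> \<le> 2 ^ t * (\<Prod>j<t. N j) / c r * M r"
      unfolding c_def M_def N_def
      using Max_mlf_eval_Hset_nonneg[OF t] prod_divide_powr_le[OF p] lp_norm_nonneg
      by (intro mult_right_mono) auto
    finally show "(\<Prod>j<t. 1) * mlf_eval t n B (?layers r) \<le> 2 ^ t * (\<Prod>j<t. N j) / c r * M r"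
      by simp
  qed
  also have "\<dots> = (\<Prod>j<t. N j) * (2 ^ t * (\<Sum>r\<in>PiE {..<t} (\<lambda>_. {1..R}). M r / c r))"
    by (simp add: sum_distrib_left mult_ac)
  finally show ?thesis by (simp add: N_def M_def c_def)
qed

lemma mlf_norm_le_dyadic_sum:
  assumes t: "1 \<le> t" and p: "1 \<le> p" and R: "1 \<le> R" "n \<le> 2 ^ R" and n: "1 \<le> n"
  shows "mlf_norm t n p B \<le> 2 ^ t * (\<Sum>r\<in>PiE {..<t} (\<lambda>_. {1..R}).
      Max (mlf_eval t n B ` PiE {..<t} (\<lambda>j. Hset n (2 ^ r j))) / 2 powr (real (\<Sum>j<t. r j) / p))"
    (is "_ \<le> ?bound")
  unfolding mlf_norm_def
proof (rule cSup_least)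
  let ?one = "restrict (\<lambda>j. restrict (\<lambda>i. 1::real) {..<n}) {..<t}"
  have "?one \<in> PiE {..<t} (\<lambda>_. {v \<in> extensional {..<n}. \<exists>i<n. v i \<noteq> 0})"
    using n by (auto intro!: exI[of _ 0])
  thus "{mlf_eval t n B xs / (\<Prod>j<t. lp_norm n p (xs j)) |xs.
      xs \<in> PiE {..<t} (\<lambda>_. {v \<in> extensional {..<n}. \<exists>i<n. v i \<noteq> 0})} \<noteq> {}" by blast
next
  fix x assume "x \<in> {mlf_eval t n B xs / (\<Prod>j<t. lp_norm n p (xs j)) |xs.
      xs \<in> PiE {..<t} (\<lambda>_. {v \<in> extensional {..<n}. \<exists>i<n. v i \<noteq> 0})}"
  then obtain xs where x: "x = mlf_eval t n B xs / (\<Prod>j<t. lp_norm n p (xs j))"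
    and xs: "\<forall>j<t. \<exists>i<n. xs j i \<noteq> 0" by (auto simp: PiE_def Pi_def)
  have "0 < (\<Prod>j<t. lp_norm n p (xs j))"
    using xs by (intro prod_pos) (auto intro: lp_norm_pos)
  thus "x \<le> ?bound"
    unfolding x pos_divide_le_eq[OF \<open>0 < (\<Prod>j<t. lp_norm n p (xs j))\<close>]
    using mlf_eval_le_dyadic_sum[OF t p R, of B xs] by (simp only: mult.commute)
qed

lemma nat_ceiling_log2:
  assumes "2 \<le> n"
  shows "1 \<le> nat \<lceil>log 2 (real n)\<rceil>" and "n \<le> 2 ^ nat \<lceil>log 2 (real n)\<rceil>"
proof -
  have "1 \<le> log 2 (real n)" using assms by simp
  thus "1 \<le> nat \<lceil>log 2 (real n)\<rceil>" by linarith
  have "real n = 2 powr (log 2 (real n))" using assms by simp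
  also have "\<dots> \<le> 2 powr (real (nat \<lceil>log 2 (real n)\<rceil>))"
    by (intro powr_mono) linarith+
  also have "\<dots> = 2 ^ nat \<lceil>log 2 (real n)\<rceil>" by (simp add: powr_realpow)
  finally show "n \<le> 2 ^ nat \<lceil>log 2 (real n)\<rceil>" by (metis of_nat_le_iff of_nat_numeral of_nat_power)
qed

lemma finite_set_pmf_rademacher: "finite (set_pmf (rademacher k))"
  unfolding rademacher_def by (subst set_Pi_pmf) (auto intro!: finite_PiE_dflt)

theorem lemma4p4:
  fixes t n k :: nat and p :: real and A :: "nat \<Rightarrow> (nat \<Rightarrow> nat) \<Rightarrow> real"
  assumes "t \<ge> 3" and "n \<ge> 2" and "\<forall>i<k. Pi_class t n (A i)" and "p \<ge> 1"
  defines "R \<equiv> nat \<lceil>log 2 (real n)\<rceil>"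
  shows "measure_pmf.expectation (rademacher k) (\<lambda>\<epsilon>. mlf_norm t n p (rsum k A \<epsilon>))
     \<le> 2 ^ t * (\<Sum>r\<in>PiE {..<t} (\<lambda>_. {1..R}).
          measure_pmf.expectation (rademacher k)
            (\<lambda>\<epsilon>. Max (mlf_eval t n (rsum k A \<epsilon>) ` PiE {..<t} (\<lambda>j. Hset n (2 ^ r j))))
          / 2 powr (real (\<Sum>j<t. r j) / p))"
proof -
  have int: "integrable (measure_pmf (rademacher k)) f" for f :: "(nat \<Rightarrow> real) \<Rightarrow> real"
    by (rule integrable_measure_pmf_finite[OF finite_set_pmf_rademacher])
  have "1 \<le> t" "1 \<le> n" using assms(1,2) by auto
  note norm_bound = mlf_norm_le_dyadic_sum[OF \<open>1 \<le> t\<close> assms(4) nat_ceiling_log2[OF assms(2)] \<open>1 \<le> n\<close>]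
  have "measure_pmf.expectation (rademacher k) (\<lambda>\<epsilon>. mlf_norm t n p (rsum k A \<epsilon>))
     \<le> measure_pmf.expectation (rademacher k) (\<lambda>\<epsilon>. 2 ^ t * (\<Sum>r\<in>PiE {..<t} (\<lambda>_. {1..R}).
          Max (mlf_eval t n (rsum k A \<epsilon>) ` PiE {..<t} (\<lambda>j. Hset n (2 ^ r j)))
          / 2 powr (real (\<Sum>j<t. r j) / p)))"
    unfolding R_def by (intro integral_mono int norm_bound)
  also have "\<dots> = 2 ^ t * (\<Sum>r\<in>PiE {..<t} (\<lambda>_. {1..R}).
          measure_pmf.expectation (rademacher k)
            (\<lambda>\<epsilon>. Max (mlf_eval t n (rsum k A \<epsilon>) ` PiE {..<t} (\<lambda>j. Hset n (2 ^ r j))))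
          / 2 powr (real (\<Sum>j<t. r j) / p))"
    by (simp add: int)
  finally show ?thesis .
qed

end
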